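(* Let $N=\begin{pmatrix}0&1&0\\0&0&1\\0&0&0\end{pmatrix}$, $\xi=(x,y,z)^T$, $\beta=2zx-y^2$, and $d\ge1$. The space $\ker(\mathrm{ad}_{N^*})\cap V^3_d$ (the orthogonal complement of $\mathrm{rng}\,\mathrm{ad}_N$ in $F^3_d$, intersected with $V^3_d$) consists exactly of the vector fields $$h=\begin{pmatrix}x^2\psi_1\\ xy\,\psi_1+x\psi_2\\ \tfrac12 y^2\psi_1+y\psi_2+\psi_3\end{pmatrix},$$ where $\psi_i=\psi_i(x,\beta)$ are polynomials in the two quantities $x$ and $\beta$ (so that $\psi_1,\psi_2,\psi_3$ are homogeneous in $\xi$ of degrees $d-2,d-1,d$ respectively) and $\psi_3$ satisfies $$-2\,\partial_\beta\psi_3=x\,\partial_x\psi_1+3\psi_1+\beta\,\partial_\beta\psi_1,$$ the partial derivatives being taken with respect to the two arguments $(x,\beta)$. The dimension of this space is $d+1$.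
   Context: $F^3_d$ is the space of vector fields on $\mathbb{R}^3$ with components real homogeneous polynomials of degree $d$, $V^3_d=\{v\in F^3_d:\nabla\cdot v=0\}$. $\mathrm{ad}_A h(\xi)=Dh(\xi)A\xi-Ah(\xi)$, $N^*=N^T$. The inner product on $F^3_d$ is $\langle p,q\rangle=\sum_i p_i(\partial_\xi)q_i(\xi)|_{\xi=0}$; with respect to it the adjoint of $\mathrm{ad}_N$ is $\mathrm{ad}_{N^*}$, so $\ker\mathrm{ad}_{N^*}$ is the orthogonal complement (cokernel) of $\mathrm{rng}\,\mathrm{ad}_N$. *)

theory Defs
  imports "HOL-Analysis.Analysis" "HOL-Library.Function_Algebras"
begin

type_synonym vec3 = "real ^ 3"
type_synonym vfield = "vec3 \<Rightarrow> vec3"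

text \<open>Homogeneous polynomial function of degree d on R^3 (coordinates x = xi$1, y = xi$2, z = xi$3).\<close>
definition hom_poly3 :: "nat \<Rightarrow> (vec3 \<Rightarrow> real) \<Rightarrow> bool" where
  "hom_poly3 d f \<longleftrightarrow> (\<exists>c :: nat \<Rightarrow> nat \<Rightarrow> real. \<forall>\<xi>.
     f \<xi> = (\<Sum>i\<le>d. \<Sum>j\<le>d - i. c i j * (\<xi>$1)^i * (\<xi>$2)^j * (\<xi>$3)^(d - i - j)))"

definition F3 :: "nat \<Rightarrow> vfield set" where
  "F3 d = {h. \<forall>i. hom_poly3 d (\<lambda>\<xi>. h \<xi> $ i)}"

definition Dfield :: "vfield \<Rightarrow> vec3 \<Rightarrow> vec3 \<Rightarrow> vec3" where
  "Dfield h \<xi> v = (\<chi> i. deriv (\<lambda>t. h (\<xi> + t *\<^sub>R v) $ i) 0)"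

definition divergence :: "vfield \<Rightarrow> vec3 \<Rightarrow> real" where
  "divergence h \<xi> = (\<Sum>i\<in>UNIV. deriv (\<lambda>t. h (\<xi> + t *\<^sub>R axis i 1) $ i) 0)"

definition V3 :: "nat \<Rightarrow> vfield set" where
  "V3 d = {h \<in> F3 d. \<forall>\<xi>. divergence h \<xi> = 0}"

definition ad :: "real^3^3 \<Rightarrow> vfield \<Rightarrow> vfield" where
  "ad A h = (\<lambda>\<xi>. Dfield h \<xi> (A *v \<xi>) - A *v h \<xi>)"

definition Nmat :: "real^3^3" where
  "Nmat = vector [vector [0, 1, 0], vector [0, 0, 1], vector [0, 0, 0]]"

text \<open>Polynomial in (x, beta) that is homogeneous of degree m in xi, where x has weight 1 and
  beta = 2zx - y^2 has weight 2; for m < 0 this is the zero polynomial.\<close>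
definition whom_poly :: "int \<Rightarrow> (real \<Rightarrow> real \<Rightarrow> real) \<Rightarrow> bool" where
  "whom_poly m \<psi> \<longleftrightarrow> (\<exists>c :: nat \<Rightarrow> real. \<forall>x b.
     \<psi> x b = (\<Sum>k\<in>{k. 2 * int k \<le> m}. c k * x ^ nat (m - 2 * int k) * b ^ k))"

definition beta :: "vec3 \<Rightarrow> real" where
  "beta \<xi> = 2 * (\<xi>$3) * (\<xi>$1) - (\<xi>$2)^2"

definition fscale :: "real \<Rightarrow> vfield \<Rightarrow> vfield" where
  "fscale c h = (\<lambda>\<xi>. c *\<^sub>R h \<xi>)"

end

theory Submission
  imports Defs
begin

text \<open>An element \<open>h\<close> of the kernel of \<open>ad (N\<^sup>T)\<close> is equivariant under the linear flow
  \<open>exp (t N\<^sup>T)\<close>: \<open>h (exp (t N\<^sup>T) \<xi>) = exp (t N\<^sup>T) h \<xi>\<close>. For \<open>x \<noteq> 0\<close> the flow carries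
  \<open>\<xi>\<close> to the point \<open>(x, 0, \<beta>/(2x))\<close> of the plane \<open>y = 0\<close>, so \<open>h\<close> is determined by its
  restriction to that plane, a polynomial in \<open>x\<close> and \<open>z\<close>. Substituting \<open>z = \<beta>/(2x)\<close> produces
  negative powers of \<open>x\<close>; comparing with the restriction of \<open>h\<close> to the plane \<open>z = 0\<close> shows
  that their coefficients vanish, and what remains is the normal form with \<open>\<psi>\<^sub>i\<close> polynomial
  in \<open>x\<close> and \<open>\<beta>\<close>; continuity covers \<open>x = 0\<close>. The divergence, evaluated on the plane
  \<open>y = 0\<close>, is exactly the differential constraint linking \<open>\<psi>\<^sub>1\<close> and \<open>\<psi>\<^sub>3\<close>.
  Conversely, \<open>\<beta>\<close> is invariant under the flow, which makes every normal form an element of the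
  kernel. The free parameters are the coefficients of \<open>\<psi>\<^sub>1\<close> and \<open>\<psi>\<^sub>2\<close> and the constant
  term of \<open>\<psi>\<^sub>3\<close>: \<open>\<lfloor>d/2\<rfloor> + \<lfloor>(d+1)/2\<rfloor> + 1 = d + 1\<close> of them.\<close>

section \<open>Homogeneous polynomial functions\<close>

text \<open>Unlike \<open>hom_poly3\<close>, which fixes a coefficient array, this inductive description is
  visibly closed under products.\<close>

inductive hpoly3 :: "nat \<Rightarrow> (vec3 \<Rightarrow> real) \<Rightarrow> bool" where
  monom: "a + b + c = d \<Longrightarrow> hpoly3 d (\<lambda>\<xi>. (\<xi>$1)^a * (\<xi>$2)^b * (\<xi>$3)^c)"
| zero: "hpoly3 d (\<lambda>_. 0)"
| add: "hpoly3 d f \<Longrightarrow> hpoly3 d g \<Longrightarrow> hpoly3 d (\<lambda>\<xi>. f \<xi> + g \<xi>)"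
| scale: "hpoly3 d f \<Longrightarrow> hpoly3 d (\<lambda>\<xi>. r * f \<xi>)"

lemma hom_poly3_monom:
  assumes "a + b + c = d"
  shows "hom_poly3 d (\<lambda>\<xi>. (\<xi>$1)^a * (\<xi>$2)^b * (\<xi>$3)^c)"
  unfolding hom_poly3_def
proof (intro exI allI)
  fix \<xi> :: vec3
  let ?m = "(\<xi>$1)^a * (\<xi>$2)^b * (\<xi>$3)^c"
  have "(\<Sum>i\<le>d. \<Sum>j\<le>d - i. (if i = a \<and> j = b then 1 else 0) * (\<xi>$1)^i * (\<xi>$2)^j * (\<xi>$3)^(d - i - j))
      = (\<Sum>i\<le>d. \<Sum>j\<le>d - i. if i = a \<and> j = b then ?m else 0)"
    using assms by (intro sum.cong refl) auto
  also have "\<dots> = (\<Sum>i\<le>d. if i = a then ?m else 0)"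
    using assms by (intro sum.cong refl) (auto simp: sum.delta)
  also have "\<dots> = ?m"
    using assms by (simp add: sum.delta)
  finally show "?m = (\<Sum>i\<le>d. \<Sum>j\<le>d - i.
      (if i = a \<and> j = b then 1 else 0) * (\<xi>$1)^i * (\<xi>$2)^j * (\<xi>$3)^(d - i - j))" ..
qed

lemma hom_poly3_add:
  assumes "hom_poly3 d f" "hom_poly3 d g"
  shows "hom_poly3 d (\<lambda>\<xi>. f \<xi> + g \<xi>)"
proof -
  obtain c1 where "\<forall>\<xi>. f \<xi> = (\<Sum>i\<le>d. \<Sum>j\<le>d - i. c1 i j * (\<xi>$1)^i * (\<xi>$2)^j * (\<xi>$3)^(d - i - j))"
    using assms(1) unfolding hom_poly3_def by blast
  moreover obtain c2 where "\<forall>\<xi>. g \<xi> = (\<Sum>i\<le>d. \<Sum>j\<le>d - i. c2 i j * (\<xi>$1)^i * (\<xi>$2)^j * (\<xi>$3)^(d - i - j))"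
    using assms(2) unfolding hom_poly3_def by blast
  ultimately show ?thesis unfolding hom_poly3_def
    by (intro exI[of _ "\<lambda>i j. c1 i j + c2 i j"]) (simp add: sum.distrib[symmetric] algebra_simps)
qed

lemma hom_poly3_scale:
  assumes "hom_poly3 d f"
  shows "hom_poly3 d (\<lambda>\<xi>. r * f \<xi>)"
proof -
  obtain c where "\<forall>\<xi>. f \<xi> = (\<Sum>i\<le>d. \<Sum>j\<le>d - i. c i j * (\<xi>$1)^i * (\<xi>$2)^j * (\<xi>$3)^(d - i - j))"
    using assms unfolding hom_poly3_def by blast
  then show ?thesis unfolding hom_poly3_def
    by (intro exI[of _ "\<lambda>i j. r * c i j"]) (simp add: sum_distrib_left algebra_simps)
qed

lemma hpoly3_imp_hom_poly3: "hpoly3 d f \<Longrightarrow> hom_poly3 d f"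
proof (induction rule: hpoly3.induct)
  case (zero d)
  show ?case unfolding hom_poly3_def by (intro exI[of _ "\<lambda>i j. 0"]) simp
qed (auto intro: hom_poly3_monom hom_poly3_add hom_poly3_scale)

lemma hpoly3_mult_monom:
  "hpoly3 q g \<Longrightarrow> hpoly3 (a + b + c + q) (\<lambda>\<xi>. (\<xi>$1)^a * (\<xi>$2)^b * (\<xi>$3)^c * g \<xi>)"
proof (induction rule: hpoly3.induct)
  case (monom a' b' c' d)
  have "hpoly3 (a + b + c + d) (\<lambda>\<xi>. (\<xi>$1)^(a + a') * (\<xi>$2)^(b + b') * (\<xi>$3)^(c + c'))"
    by (rule hpoly3.monom) (use monom in simp)
  then show ?case by (simp add: power_add algebra_simps)
next
  case (add d f g)
  then show ?case using hpoly3.add[OF add.IH] by (simp add: algebra_simps)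
next
  case (scale d f r)
  then show ?case using hpoly3.scale[OF scale.IH, of r] by (simp add: algebra_simps)
qed (simp add: hpoly3.zero)

lemma hpoly3_mult: "hpoly3 p f \<Longrightarrow> hpoly3 q g \<Longrightarrow> hpoly3 (p + q) (\<lambda>\<xi>. f \<xi> * g \<xi>)"
proof (induction rule: hpoly3.induct)
  case (monom a b c d)
  then show ?case using hpoly3_mult_monom[of q g a b c] by simp
next
  case (add d f1 f2)
  then show ?case using hpoly3.add[OF add.IH] by (simp add: algebra_simps)
next
  case (scale d f r)
  then show ?case using hpoly3.scale[OF scale.IH, of r] by (simp add: algebra_simps)
qed (simp add: hpoly3.zero)

lemma hpoly3_sum:
  "finite K \<Longrightarrow> (\<And>k. k \<in> K \<Longrightarrow> hpoly3 d (f k)) \<Longrightarrow> hpoly3 d (\<lambda>\<xi>. \<Sum>k\<in>K. f k \<xi>)"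
  by (induction K rule: finite_induct) (auto intro: hpoly3.zero hpoly3.add)

lemma hpoly3_power: "hpoly3 p f \<Longrightarrow> hpoly3 (p * k) (\<lambda>\<xi>. (f \<xi>)^k)"
proof (induction k)
  case 0
  show ?case using hpoly3.monom[of 0 0 0 0] by simp
next
  case (Suc k)
  then have "hpoly3 (p + p * k) (\<lambda>\<xi>. f \<xi> * (f \<xi>)^k)"
    by (intro hpoly3_mult)
  then show ?case by (simp add: algebra_simps)
qed

lemma hpoly3_const: "hpoly3 0 (\<lambda>\<xi>. 1)"
  using hpoly3.monom[of 0 0 0 0] by simp

lemma hpoly3_x: "hpoly3 1 (\<lambda>\<xi>. \<xi>$1)"
  using hpoly3.monom[of 1 0 0 1] by simp

lemma hpoly3_y: "hpoly3 1 (\<lambda>\<xi>. \<xi>$2)"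
  using hpoly3.monom[of 0 1 0 1] by simp

lemma hpoly3_beta: "hpoly3 2 beta"
proof -
  have "hpoly3 2 (\<lambda>\<xi>. 2 * ((\<xi>$1)^1 * (\<xi>$2)^0 * (\<xi>$3)^1) + (-1) * ((\<xi>$1)^0 * (\<xi>$2)^2 * (\<xi>$3)^0))"
    by (intro hpoly3.add hpoly3.scale hpoly3.monom) auto
  then show ?thesis unfolding beta_def by (simp add: algebra_simps)
qed

lemma hom_poly3_differentiable:
  assumes "hom_poly3 d f"
  shows "f differentiable (at \<xi>)"
proof -
  obtain c where "\<forall>\<xi>. f \<xi> = (\<Sum>i\<le>d. \<Sum>j\<le>d - i. c i j * (\<xi>$1)^i * (\<xi>$2)^j * (\<xi>$3)^(d - i - j))"
    using assms unfolding hom_poly3_def by blast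
  then have "f = (\<lambda>\<xi>. \<Sum>i\<le>d. \<Sum>j\<le>d - i. c i j * (\<xi>$1)^i * (\<xi>$2)^j * (\<xi>$3)^(d - i - j))"
    by auto
  moreover have "\<dots> differentiable (at \<xi>)"
    by (intro differentiable_sum differentiable_mult differentiable_power differentiable_const finite_atMost
        bounded_linear_imp_differentiable[OF bounded_linear_vec_nth] ballI)
  ultimately show ?thesis by simp
qed

lemma hom_poly3_continuous: "hom_poly3 d f \<Longrightarrow> continuous (at \<xi>) f"
  using hom_poly3_differentiable differentiable_imp_continuous_within by blast

lemma F3_nth: "h \<in> F3 d \<Longrightarrow> hom_poly3 d (\<lambda>\<xi>. h \<xi> $ i)"
  unfolding F3_def by blast

lemma has_real_derivative_along_curve:
  fixes f :: "vec3 \<Rightarrow> real"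
  assumes "(f has_derivative F) (at (p t))" "(p has_vector_derivative p') (at t)"
  shows "((\<lambda>s. f (p s)) has_real_derivative F p') (at t)"
proof -
  have "((\<lambda>s. f (p s)) has_derivative (\<lambda>s. F (s *\<^sub>R p'))) (at t)"
    using has_derivative_compose[OF assms(2)[unfolded has_vector_derivative_def] assms(1)] by simp
  moreover have "(\<lambda>s. F (s *\<^sub>R p')) = (*) (F p')"
    using has_derivative_linear[OF assms(1)] by (auto simp: linear_scale mult.commute)
  ultimately show ?thesis unfolding has_field_derivative_def by simp
qed

lemma deriv_along_line:
  fixes f :: "vec3 \<Rightarrow> real"
  assumes "(f has_derivative F) (at \<xi>)"
  shows "deriv (\<lambda>t. f (\<xi> + t *\<^sub>R v)) 0 = F v"
proof -
  have "((\<lambda>t. \<xi> + t *\<^sub>R v) has_vector_derivative v) (at 0)"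
    by (auto intro!: derivative_eq_intros)
  then show ?thesis
    using has_real_derivative_along_curve[of f F "\<lambda>t. \<xi> + t *\<^sub>R v" 0 v] assms
    by (simp add: DERIV_imp_deriv)
qed

lemma Dfield_nth:
  assumes "h \<in> F3 d"
  shows "Dfield h \<xi> v $ i = frechet_derivative (\<lambda>\<xi>. h \<xi> $ i) (at \<xi>) v"
  using deriv_along_line[OF frechet_derivative_works[THEN iffD1,
        OF hom_poly3_differentiable[OF F3_nth[OF assms]]]]
  by (simp add: Dfield_def)

lemma vector3_add_axis:
  "vector [a, b, c] + t *\<^sub>R axis 1 1 = (vector [a + t, b, c] :: vec3)"
  "vector [a, b, c] + t *\<^sub>R axis 2 1 = (vector [a, b + t, c] :: vec3)"
  "vector [a, b, c] + t *\<^sub>R axis 3 1 = (vector [a, b, c + t] :: vec3)"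
  by (simp_all add: vec_eq_iff forall_3 axis_def)

section \<open>Equivariance under the flow of \<open>N\<^sup>T\<close>\<close>

lemma transpose_Nmat_mult: "transpose Nmat *v v = vector [0, v$1, v$2]"
  by (simp add: vec_eq_iff forall_3 matrix_vector_mult_def sum_3 transpose_def Nmat_def)

lemma ad_kernel_Dfield:
  assumes "ad (transpose Nmat) h = (\<lambda>_. 0)"
  shows "Dfield h \<xi> (vector [0, \<xi>$1, \<xi>$2]) = vector [0, h \<xi> $ 1, h \<xi> $ 2]"
proof -
  have "Dfield h \<xi> (transpose Nmat *v \<xi>) - transpose Nmat *v h \<xi> = 0"
    using fun_cong[OF assms, of \<xi>] unfolding ad_def .
  then show ?thesis unfolding transpose_Nmat_mult by simp
qed

text \<open>\<open>nflow \<xi> t = exp (t N\<^sup>T) \<xi>\<close>, the flow of the linear vector field \<open>N\<^sup>T \<xi>\<close>.\<close>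

definition nflow :: "vec3 \<Rightarrow> real \<Rightarrow> vec3" where
  "nflow \<xi> t = vector [\<xi>$1, \<xi>$2 + t * \<xi>$1, \<xi>$3 + t * \<xi>$2 + t^2/2 * \<xi>$1]"

lemma nflow_vector: "nflow (vector [a, b, c]) t = vector [a, b + t * a, c + t * b + t^2/2 * a]"
  by (simp add: nflow_def)

lemma nflow_0: "nflow \<xi> 0 = \<xi>"
  by (simp add: vec_eq_iff forall_3 nflow_def)

lemma nflow_add: "nflow (nflow \<xi> s) t = nflow \<xi> (s + t)"
  by (simp add: vec_eq_iff forall_3 nflow_def field_simps power2_eq_square)

lemma nflow_has_vector_derivative:
  "(nflow \<xi> has_vector_derivative vector [0, nflow \<xi> t $ 1, nflow \<xi> t $ 2]) (at t)"
proof -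
  have "nflow \<xi> = (\<lambda>t. \<xi> + t *\<^sub>R vector [0, \<xi>$1, \<xi>$2] + (t^2/2) *\<^sub>R vector [0, 0, \<xi>$1])"
    by (simp add: fun_eq_iff vec_eq_iff forall_3 nflow_def algebra_simps)
  moreover have "((\<lambda>t. \<xi> + t *\<^sub>R vector [0, \<xi>$1, \<xi>$2] + (t^2/2) *\<^sub>R vector [0, 0, \<xi>$1]) has_vector_derivative
      vector [0, \<xi>$1, \<xi>$2] + t *\<^sub>R vector [0, 0, \<xi>$1]) (at t)"
    by (auto intro!: derivative_eq_intros)
  moreover have "vector [0, \<xi>$1, \<xi>$2] + t *\<^sub>R vector [0, 0, \<xi>$1] = (vector [0, nflow \<xi> t $ 1, nflow \<xi> t $ 2] :: vec3)"
    by (simp add: vec_eq_iff forall_3 nflow_def)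
  ultimately show ?thesis by simp
qed

lemma ad_kernel_has_derivative_along_flow:
  assumes "h \<in> F3 d" "ad (transpose Nmat) h = (\<lambda>_. 0)"
  shows "((\<lambda>s. h (nflow \<xi> s) $ i) has_real_derivative
           vector [0, h (nflow \<xi> t) $ 1, h (nflow \<xi> t) $ 2] $ i) (at t)"
proof -
  let ?v = "vector [0, nflow \<xi> t $ 1, nflow \<xi> t $ 2] :: vec3"
  have "((\<lambda>s. h (nflow \<xi> s) $ i) has_real_derivative
      frechet_derivative (\<lambda>\<xi>. h \<xi> $ i) (at (nflow \<xi> t)) ?v) (at t)"
    using has_real_derivative_along_curve[OF _ nflow_has_vector_derivative]
      frechet_derivative_works hom_poly3_differentiable[OF F3_nth[OF assms(1)]] by blast
  also have "frechet_derivative (\<lambda>\<xi>. h \<xi> $ i) (at (nflow \<xi> t)) ?v = Dfield h (nflow \<xi> t) ?v $ i"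
    using Dfield_nth[OF assms(1)] by simp
  finally show ?thesis
    using ad_kernel_Dfield[OF assms(2)] by simp
qed

text \<open>Along the flow, \<open>exp (-t N\<^sup>T) h (exp (t N\<^sup>T) \<xi>)\<close> has derivative
  \<open>exp (-t N\<^sup>T) (Dh N\<^sup>T \<xi> - N\<^sup>T h) = 0\<close>, so it is constant.\<close>

lemma ad_kernel_flow_equivariant:
  assumes "h \<in> F3 d" "ad (transpose Nmat) h = (\<lambda>_. 0)"
  shows "h (nflow \<xi> t) = nflow (h \<xi>) t"
proof -
  define H where "H i s = h (nflow \<xi> s) $ i" for i s
  note H' = ad_kernel_has_derivative_along_flow[OF assms, of \<xi>]
  have H1: "(H 1 has_real_derivative 0) (at s)"
    and H2: "(H 2 has_real_derivative H 1 s) (at s)"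
    and H3: "(H 3 has_real_derivative H 2 s) (at s)" for s
    using H'[of 1 s] H'[of 2 s] H'[of 3 s] by (simp_all add: H_def[abs_def])
  let ?g = "\<lambda>s. nflow (h (nflow \<xi> s)) (- s)"
  have g: "?g s = vector [H 1 s, H 2 s - s * H 1 s, H 3 s - s * H 2 s + s^2/2 * H 1 s]" for s
    by (simp add: nflow_def H_def)
  have g': "((\<lambda>s. ?g s $ i) has_real_derivative 0) (at s)" for i s
  proof -
    have "i = 1 \<or> i = 2 \<or> i = 3" by (rule exhaust_3)
    then show ?thesis
      unfolding g by (elim disjE) (auto intro!: derivative_eq_intros H1 H2 H3)
  qed
  have "?g t $ i = ?g 0 $ i" for i
    using DERIV_isconst_all[of "\<lambda>s. ?g s $ i"] g' by blast
  then have "?g t = h \<xi>"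
    by (simp add: vec_eq_iff nflow_0)
  then show ?thesis
    using nflow_add[of "h (nflow \<xi> t)" "- t" t] by (simp add: nflow_0)
qed

section \<open>Coefficients of power sums\<close>

lemma power_sum_zero_imp_coeff_zero:
  fixes a :: "'i \<Rightarrow> real"
  assumes fin: "finite K" and zero: "\<And>u. u \<noteq> 0 \<Longrightarrow> (\<Sum>k\<in>K. a k * u^(e k)) = 0"
  shows "(\<Sum>k\<in>{k\<in>K. e k = n}. a k) = 0"
proof (rule ccontr)
  define M where "M = Max (insert n (e ` K))"
  define c where "c m = (\<Sum>k\<in>{k\<in>K. e k = m}. a k)" for m
  assume "(\<Sum>k\<in>{k\<in>K. e k = n}. a k) \<noteq> 0"
  then have "c n \<noteq> 0" "n \<le> M"
    using fin by (simp_all add: c_def M_def)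
  then have "finite {u. (\<Sum>m\<le>M. c m * u^m) = 0}"
    by (intro polyfun_rootbound_finite) auto
  moreover have "(\<Sum>k\<in>K. a k * u^(e k)) = (\<Sum>m\<le>M. c m * u^m)" for u
  proof -
    have "e ` K \<subseteq> {..M}"
      using fin by (auto simp: M_def)
    then have "(\<Sum>k\<in>K. a k * u^(e k)) = (\<Sum>m\<le>M. \<Sum>k\<in>{k\<in>K. e k = m}. a k * u^(e k))"
      using sum.group[OF fin, of "{..M}" e "\<lambda>k. a k * u^(e k)"] by simp
    then show ?thesis
      unfolding c_def sum_distrib_right by simp
  qed
  then have "- {0} \<subseteq> {u::real. (\<Sum>m\<le>M. c m * u^m) = 0}"
    using zero by auto
  ultimately have "finite (- {0::real})"
    by (rule finite_subset[rotated])
  then show False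
    by (simp add: infinite_UNIV_char_0)
qed

lemma power_sum_zero_imp_coeff_zero_inj:
  fixes a :: "'i \<Rightarrow> real"
  assumes "finite K" "inj_on e K" "\<And>u. u \<noteq> 0 \<Longrightarrow> (\<Sum>k\<in>K. a k * u^(e k)) = 0" "k \<in> K"
  shows "a k = 0"
proof -
  have "{k'\<in>K. e k' = e k} = {k}"
    using assms(2,4) by (auto simp: inj_on_def)
  then show ?thesis
    using power_sum_zero_imp_coeff_zero[OF assms(1,3), of "e k"] by simp
qed

lemma power_sum4_zero_imp_coeff_zero:
  fixes fa fb fc fd :: "nat \<Rightarrow> real"
  assumes "\<And>u. u \<noteq> 0 \<Longrightarrow> (\<Sum>k\<le>d. fa k * u^(ga k)) + (\<Sum>k\<le>d. fb k * u^(gb k)) +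
      (\<Sum>k\<le>d. fc k * u^(gc k)) + (\<Sum>k\<le>d. fd k * u^(gd k)) = 0"
  shows "(\<Sum>k\<in>{k\<in>{..d}. ga k = n}. fa k) + (\<Sum>k\<in>{k\<in>{..d}. gb k = n}. fb k) +
      (\<Sum>k\<in>{k\<in>{..d}. gc k = n}. fc k) + (\<Sum>k\<in>{k\<in>{..d}. gd k = n}. fd k) = 0"
proof -
  define a where "a p = (case p of (k, j) \<Rightarrow>
      if j = (0::nat) then fa k else if j = 1 then fb k else if j = 2 then fc k else fd k)" for p
  define e where "e p = (case p of (k, j) \<Rightarrow>
      if j = (0::nat) then ga k else if j = 1 then gb k else if j = 2 then gc k else gd k)" for p
  have a: "a (k, 0) = fa k" "a (k, 1) = fb k" "a (k, 2) = fc k" "a (k, 3) = fd k" for k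
    by (simp_all add: a_def)
  have e: "e (k, 0) = ga k" "e (k, 1) = gb k" "e (k, 2) = gc k" "e (k, 3) = gd k" for k
    by (simp_all add: e_def)
  have split: "(\<Sum>p\<in>{..d} \<times> {..3}. g p) =
      (\<Sum>k\<le>d. g (k, 0)) + (\<Sum>k\<le>d. g (k, 1)) + (\<Sum>k\<le>d. g (k, 2)) + (\<Sum>k\<le>d. g (k, 3))"
    for g :: "nat \<times> nat \<Rightarrow> real"
  proof -
    have "(\<Sum>p\<in>{..d} \<times> {..3}. g p) = (\<Sum>k\<le>d. \<Sum>j\<le>3. g (k, j))"
      by (simp add: sum.cartesian_product)
    also have "\<dots> = (\<Sum>k\<le>d. g (k, 0) + g (k, 1) + g (k, 2) + g (k, 3))"
      by (simp add: numeral_3_eq_3 numeral_2_eq_2 atMost_Suc add_ac)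
    finally show ?thesis
      by (simp add: sum.distrib)
  qed
  have filter: "(\<Sum>k\<in>{k\<in>K. g k = n}. f k) = (\<Sum>k\<in>K. if g k = n then f k else 0)"
    if "finite K" for K and f :: "'a \<Rightarrow> real" and g
    using that by (rule sum.inter_filter)
  have "(\<Sum>p\<in>{p\<in>{..d} \<times> {..3}. e p = n}. a p) = 0"
    by (rule power_sum_zero_imp_coeff_zero) (use assms in \<open>simp_all only: split a e finite_cartesian_product finite_atMost\<close>)
  then show ?thesis
    by (simp only: filter split a e finite_cartesian_product finite_atMost)
qed

lemma hom_poly_sum_at_y0:
  fixes c :: "nat \<Rightarrow> nat \<Rightarrow> real"
  shows "(\<Sum>i\<le>d. \<Sum>j\<le>d - i. c i j * x^i * 0^j * z^(d - i - j)) = (\<Sum>k\<le>d. c (d - k) 0 * x^(d - k) * z^k)"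
proof -
  have "(\<Sum>i\<le>d. \<Sum>j\<le>d - i. c i j * x^i * 0^j * z^(d - i - j)) = (\<Sum>i\<le>d. c i 0 * x^i * z^(d - i))"
  proof (intro sum.cong refl)
    fix i
    have "(\<Sum>j\<le>d - i. c i j * x^i * 0^j * z^(d - i - j)) = (\<Sum>j\<le>d - i. if j = 0 then c i 0 * x^i * z^(d - i) else 0)"
      by (intro sum.cong refl) (auto simp: power_0_left)
    then show "(\<Sum>j\<le>d - i. c i j * x^i * 0^j * z^(d - i - j)) = c i 0 * x^i * z^(d - i)"
      by (simp add: sum.delta)
  qed
  also have "\<dots> = (\<Sum>k\<le>d. c (d - k) 0 * x^(d - k) * z^k)"
    by (rule sum.reindex_bij_witness[where i="\<lambda>k. d - k" and j="\<lambda>k. d - k"]) auto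
  finally show ?thesis .
qed

lemma hom_poly_sum_at_z0:
  fixes c :: "nat \<Rightarrow> nat \<Rightarrow> real"
  shows "(\<Sum>i\<le>d. \<Sum>j\<le>d - i. c i j * x^i * y^j * 0^(d - i - j)) = (\<Sum>k\<le>d. c (d - k) k * x^(d - k) * y^k)"
proof -
  have "(\<Sum>i\<le>d. \<Sum>j\<le>d - i. c i j * x^i * y^j * 0^(d - i - j)) = (\<Sum>i\<le>d. c i (d - i) * x^i * y^(d - i))"
  proof (intro sum.cong refl)
    fix i
    have "(\<Sum>j\<le>d - i. c i j * x^i * y^j * 0^(d - i - j))
        = (\<Sum>j\<le>d - i. if j = d - i then c i (d - i) * x^i * y^(d - i) else 0)"
      by (intro sum.cong refl) (auto simp: power_0_left)
    then show "(\<Sum>j\<le>d - i. c i j * x^i * y^j * 0^(d - i - j)) = c i (d - i) * x^i * y^(d - i)"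
      by (simp add: sum.delta')
  qed
  also have "\<dots> = (\<Sum>k\<le>d. c (d - k) k * x^(d - k) * y^k)"
    by (rule sum.reindex_bij_witness[where i="\<lambda>k. d - k" and j="\<lambda>k. d - k"]) auto
  finally show ?thesis .
qed

lemma sum_power_deriv_shift:
  fixes c :: "nat \<Rightarrow> real"
  shows "(\<Sum>k\<le>n. c k * real k * z^(k - 1)) = (\<Sum>k<n. (real k + 1) * c (Suc k) * z^k)"
  by (induction n) (simp_all add: algebra_simps)

section \<open>Restrictions of a divergence-free kernel element to coordinate planes\<close>

locale ad_kernel_divfree =
  fixes d :: nat and h :: vfield
  assumes F3: "h \<in> F3 d" and ad_kernel: "ad (transpose Nmat) h = (\<lambda>_. 0)"
    and divfree: "\<forall>\<xi>. divergence h \<xi> = 0"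
begin

definition hcoeff :: "3 \<Rightarrow> nat \<Rightarrow> nat \<Rightarrow> real" where
  "hcoeff i = (SOME c. \<forall>\<xi>. h \<xi> $ i =
     (\<Sum>i'\<le>d. \<Sum>j\<le>d - i'. c i' j * (\<xi>$1)^i' * (\<xi>$2)^j * (\<xi>$3)^(d - i' - j)))"

lemma h_nth_eq_hcoeff_sum:
  "h \<xi> $ i = (\<Sum>i'\<le>d. \<Sum>j\<le>d - i'. hcoeff i i' j * (\<xi>$1)^i' * (\<xi>$2)^j * (\<xi>$3)^(d - i' - j))"
proof -
  have "\<exists>c. \<forall>\<xi>. h \<xi> $ i = (\<Sum>i'\<le>d. \<Sum>j\<le>d - i'. c i' j * (\<xi>$1)^i' * (\<xi>$2)^j * (\<xi>$3)^(d - i' - j))"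
    using F3_nth[OF F3, of i] unfolding hom_poly3_def .
  then show ?thesis
    unfolding hcoeff_def by (rule someI_ex[THEN spec])
qed

definition ycoeff :: "3 \<Rightarrow> nat \<Rightarrow> real" where
  "ycoeff i k = (if k \<le> d then hcoeff i (d - k) 0 else 0)"

definition zcoeff :: "nat \<Rightarrow> real" where
  "zcoeff k = hcoeff 3 (d - k) k"

lemma h_at_y0: "h (vector [x, 0, z]) $ i = (\<Sum>k\<le>d. ycoeff i k * x^(d - k) * z^k)"
  unfolding h_nth_eq_hcoeff_sum vector_3 hom_poly_sum_at_y0 by (simp add: ycoeff_def)

lemma h_at_z0: "h (vector [x, y, 0]) $ 3 = (\<Sum>k\<le>d. zcoeff k * x^(d - k) * y^k)"
  unfolding h_nth_eq_hcoeff_sum vector_3 hom_poly_sum_at_z0 zcoeff_def ..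

lemma h_nflow: "h (nflow \<xi> t) = nflow (h \<xi>) t"
  by (rule ad_kernel_flow_equivariant[OF F3 ad_kernel])

lemma deriv_x_h1_at_y0:
  "deriv (\<lambda>t. h (vector [1, 0, z] + t *\<^sub>R axis 1 1) $ 1) 0 = (\<Sum>k\<le>d. ycoeff 1 k * (real d - real k) * z^k)"
proof -
  have "(\<lambda>t. h (vector [1, 0, z] + t *\<^sub>R axis 1 1) $ 1) = (\<lambda>t. \<Sum>k\<le>d. ycoeff 1 k * (1 + t)^(d - k) * z^k)"
    by (simp add: vector3_add_axis h_at_y0)
  moreover have "((\<lambda>t. \<Sum>k\<le>d. ycoeff 1 k * (1 + t)^(d - k) * z^k) has_real_derivative
      (\<Sum>k\<le>d. ycoeff 1 k * (real d - real k) * z^k)) (at 0)"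
    by (auto intro!: derivative_eq_intros sum.cong simp: of_nat_diff)
  ultimately show ?thesis
    by (simp add: DERIV_imp_deriv)
qed

lemma deriv_z_h3_at_y0:
  "deriv (\<lambda>t. h (vector [1, 0, z] + t *\<^sub>R axis 3 1) $ 3) 0 = (\<Sum>k\<le>d. ycoeff 3 k * real k * z^(k - 1))"
proof -
  have "(\<lambda>t. h (vector [1, 0, z] + t *\<^sub>R axis 3 1) $ 3) = (\<lambda>t. \<Sum>k\<le>d. ycoeff 3 k * (z + t)^k)"
    by (simp add: vector3_add_axis h_at_y0)
  moreover have "((\<lambda>t. \<Sum>k\<le>d. ycoeff 3 k * (z + t)^k) has_real_derivative
      (\<Sum>k\<le>d. ycoeff 3 k * real k * z^(k - 1))) (at 0)"
    by (auto intro!: derivative_eq_intros sum.cong)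
  ultimately show ?thesis
    by (simp add: DERIV_imp_deriv)
qed

text \<open>Along the \<open>y\<close>-direction the second component is read off the plane \<open>y = 0\<close>
  through the flow: \<open>(1, t, z) = nflow (1, 0, z - t\<^sup>2/2) t\<close>.\<close>

lemma deriv_y_h2_at_y0:
  "deriv (\<lambda>t. h (vector [1, 0, z] + t *\<^sub>R axis 2 1) $ 2) 0 = (\<Sum>k\<le>d. ycoeff 1 k * z^k)"
proof -
  have "h (vector [1, 0, z] + t *\<^sub>R axis 2 1) = nflow (h (vector [1, 0, z - t^2/2])) t" for t
    unfolding h_nflow[symmetric] by (simp add: nflow_vector vector3_add_axis)
  then have "(\<lambda>t. h (vector [1, 0, z] + t *\<^sub>R axis 2 1) $ 2)
      = (\<lambda>t. (\<Sum>k\<le>d. ycoeff 2 k * (z - t^2/2)^k) + t * (\<Sum>k\<le>d. ycoeff 1 k * (z - t^2/2)^k))"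
    by (simp add: nflow_def h_at_y0)
  moreover have "((\<lambda>t. (\<Sum>k\<le>d. ycoeff 2 k * (z - t^2/2)^k) + t * (\<Sum>k\<le>d. ycoeff 1 k * (z - t^2/2)^k))
      has_real_derivative (\<Sum>k\<le>d. ycoeff 1 k * z^k)) (at 0)"
    by (auto intro!: derivative_eq_intros sum.cong)
  ultimately show ?thesis
    by (simp add: DERIV_imp_deriv)
qed

lemma sum_ycoeff3_deriv:
  "(\<Sum>k\<le>d. ycoeff 3 k * real k * z^(k - 1)) = (\<Sum>k\<le>d. (real k + 1) * ycoeff 3 (Suc k) * z^k)"
proof -
  have "(\<Sum>k\<le>d. ycoeff 3 k * real k * z^(k - 1)) = (\<Sum>k<d. (real k + 1) * ycoeff 3 (Suc k) * z^k)"
    by (rule sum_power_deriv_shift)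
  also have "\<dots> = (\<Sum>k\<le>d. (real k + 1) * ycoeff 3 (Suc k) * z^k)"
    by (simp add: lessThan_Suc_atMost[symmetric] ycoeff_def)
  finally show ?thesis .
qed

lemma ycoeff_divergence_relation:
  assumes "k \<le> d"
  shows "ycoeff 1 k * (real d - real k + 1) + (real k + 1) * ycoeff 3 (Suc k) = 0"
proof -
  have "(\<Sum>k\<le>d. (ycoeff 1 k * (real d - real k + 1) + (real k + 1) * ycoeff 3 (Suc k)) * z^k) = 0" for z
  proof -
    have "0 = divergence h (vector [1, 0, z])"
      using divfree by simp
    also have "\<dots> = (\<Sum>k\<le>d. ycoeff 1 k * (real d - real k) * z^k) + (\<Sum>k\<le>d. ycoeff 1 k * z^k)
        + (\<Sum>k\<le>d. (real k + 1) * ycoeff 3 (Suc k) * z^k)"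
      unfolding divergence_def sum_3 deriv_x_h1_at_y0 deriv_y_h2_at_y0 deriv_z_h3_at_y0
        sum_ycoeff3_deriv ..
    also have "\<dots> = (\<Sum>k\<le>d. (ycoeff 1 k * (real d - real k + 1) + (real k + 1) * ycoeff 3 (Suc k)) * z^k)"
      unfolding sum.distrib[symmetric] by (intro sum.cong refl) (simp add: algebra_simps)
    finally show ?thesis ..
  qed
  then show ?thesis
    using polyfun_eq_0[of "\<lambda>k. ycoeff 1 k * (real d - real k + 1) + (real k + 1) * ycoeff 3 (Suc k)" d] assms
    by blast
qed

lemma power_scaled_y0_term:
  fixes u :: real
  assumes "u \<noteq> 0" "k \<le> d"
  shows "u^d * (C * (1/u)^(d - k) * (- u/2)^k) = C * (-1/2)^k * u^(2 * k)"
proof -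
  have "u^d = u^k * u^(d - k)"
    using assms(2) by (simp add: power_add[symmetric])
  moreover have "(- u/2)^k = (-1/2)^k * u^k"
    by (simp add: power_mult_distrib[symmetric])
  ultimately show ?thesis
    using assms(1) by (simp add: power_one_over field_simps power_mult power2_eq_square power_mult_distrib)
qed

text \<open>Transporting the point \<open>(1/u, 1, 0) = nflow (1/u, 0, -u/2) u\<close> to the plane \<open>y = 0\<close>
  compares the coefficients on the planes \<open>z = 0\<close> and \<open>y = 0\<close>; after scaling by \<open>u\<^sup>d\<close>
  the left-hand side has degree at most \<open>d\<close> in \<open>u\<close>.\<close>

lemma zcoeff_ycoeff_identity:
  fixes u :: real
  assumes u: "u \<noteq> 0"
  shows "(\<Sum>k\<le>d. zcoeff k * u^k) = (\<Sum>k\<le>d. ycoeff 3 k * (-1/2)^k * u^(2 * k))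
      + u * (\<Sum>k\<le>d. ycoeff 2 k * (-1/2)^k * u^(2 * k)) + u^2/2 * (\<Sum>k\<le>d. ycoeff 1 k * (-1/2)^k * u^(2 * k))"
proof -
  have scaled: "u^d * (\<Sum>k\<le>d. C k * (1/u)^(d - k) * (- u/2)^k) = (\<Sum>k\<le>d. C k * (-1/2)^k * u^(2 * k))" for C
    unfolding sum_distrib_left by (intro sum.cong refl power_scaled_y0_term[OF u]) simp
  have "nflow (vector [1/u, 0, - u/2]) u = vector [1/u, 1, 0]"
    using u by (simp add: nflow_vector power2_eq_square)
  then have "h (vector [1/u, 1, 0]) = nflow (h (vector [1/u, 0, - u/2])) u"
    using h_nflow by metis
  then have "h (vector [1/u, 1, 0]) $ 3 = h (vector [1/u, 0, - u/2]) $ 3 + u * h (vector [1/u, 0, - u/2]) $ 2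
      + u^2/2 * h (vector [1/u, 0, - u/2]) $ 1"
    by (simp add: nflow_def)
  then have "u^d * h (vector [1/u, 1, 0]) $ 3 = (\<Sum>k\<le>d. ycoeff 3 k * (-1/2)^k * u^(2 * k))
      + u * (\<Sum>k\<le>d. ycoeff 2 k * (-1/2)^k * u^(2 * k)) + u^2/2 * (\<Sum>k\<le>d. ycoeff 1 k * (-1/2)^k * u^(2 * k))"
    unfolding h_at_y0 scaled[symmetric] by (simp add: algebra_simps)
  moreover have "u^d * h (vector [1/u, 1, 0]) $ 3 = (\<Sum>k\<le>d. zcoeff k * u^k)"
    unfolding h_at_z0 sum_distrib_left
    by (intro sum.cong refl) (use u in \<open>simp add: power_one_over field_simps flip: power_add\<close>)
  ultimately show ?thesis by simp
qed

lemma zcoeff_ycoeff_coeff_identity: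
  "(\<Sum>k\<in>{k\<in>{..d}. k = n}. zcoeff k)
   + (\<Sum>k\<in>{k\<in>{..d}. 2 * k = n}. - ((-1/2)^k * ycoeff 3 k))
   + (\<Sum>k\<in>{k\<in>{..d}. 2 * k + 1 = n}. - ((-1/2)^k * ycoeff 2 k))
   + (\<Sum>k\<in>{k\<in>{..d}. 2 * k + 2 = n}. - ((-1/2)^k * ycoeff 1 k / 2)) = 0"
proof (rule power_sum4_zero_imp_coeff_zero)
  fix u :: real
  assume "u \<noteq> 0"
  from zcoeff_ycoeff_identity[OF this]
  show "(\<Sum>k\<le>d. zcoeff k * u^k) + (\<Sum>k\<le>d. - ((-1/2)^k * ycoeff 3 k) * u^(2 * k))
      + (\<Sum>k\<le>d. - ((-1/2)^k * ycoeff 2 k) * u^(2 * k + 1))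
      + (\<Sum>k\<le>d. - ((-1/2)^k * ycoeff 1 k / 2) * u^(2 * k + 2)) = 0"
    unfolding sum_distrib_left
    by (simp add: sum_negf power_add power2_eq_square algebra_simps sum_subtractf[symmetric])
qed

lemma ycoeff3_Suc_eq_ycoeff1:
  assumes "d < 2 * Suc m" "m \<le> d"
  shows "ycoeff 3 (Suc m) = ycoeff 1 m"
proof -
  have S1: "{k\<in>{..d}. k = 2 * Suc m} = {}" and S3: "{k\<in>{..d}. 2 * k + 1 = 2 * Suc m} = {}"
    and S4: "{k\<in>{..d}. 2 * k + 2 = 2 * Suc m} = {m}"
    using assms by auto presburger
  have S2: "(\<Sum>k\<in>{k\<in>{..d}. 2 * k = 2 * Suc m}. - ((-1/2)^k * ycoeff 3 k))
      = - ((-1/2)^(Suc m) * ycoeff 3 (Suc m))"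
  proof (cases "Suc m \<le> d")
    case True
    then have "{k\<in>{..d}. 2 * k = 2 * Suc m} = {Suc m}" by auto
    then show ?thesis by simp
  next
    case False
    then have "{k\<in>{..d}. 2 * k = 2 * Suc m} = {}" "ycoeff 3 (Suc m) = 0"
      by (auto simp: ycoeff_def)
    then show ?thesis by (simp only: sum.empty)
  qed
  have "- ((-1/2)^(Suc m) * ycoeff 3 (Suc m)) + - ((-1/2)^m * ycoeff 1 m / 2) = 0"
    using zcoeff_ycoeff_coeff_identity[of "2 * Suc m"] unfolding S1 S2 S3 S4 by simp
  then have "(-1/2)^m * (ycoeff 3 (Suc m) - ycoeff 1 m) = 0"
    by (simp add: algebra_simps)
  then show ?thesis by simp
qed

lemma ycoeff1_eq_0: "d < 2 * m + 2 \<Longrightarrow> ycoeff 1 m = 0"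
proof (cases "m \<le> d")
  case True
  assume "d < 2 * m + 2"
  then have "ycoeff 1 m * (real d - real m + 1) + (real m + 1) * ycoeff 1 m = 0"
    using ycoeff_divergence_relation[OF True] ycoeff3_Suc_eq_ycoeff1[OF _ True] by simp
  then have "ycoeff 1 m * (real d + 2) = 0"
    by (simp add: algebra_simps)
  then show ?thesis by simp
qed (simp add: ycoeff_def)

lemma ycoeff3_eq_0: "d < 2 * k \<Longrightarrow> ycoeff 3 k = 0"
proof (cases k)
  case (Suc m)
  assume "d < 2 * k"
  then show ?thesis
    using Suc ycoeff3_Suc_eq_ycoeff1[of m] ycoeff1_eq_0[of m] by (cases "m \<le> d") (simp_all add: ycoeff_def)
qed simp

lemma ycoeff2_eq_0: "d < 2 * k + 1 \<Longrightarrow> ycoeff 2 k = 0"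
proof (cases "k \<le> d")
  case True
  assume "d < 2 * k + 1"
  then have S1: "{k'\<in>{..d}. k' = 2 * k + 1} = {}" and S2: "{k'\<in>{..d}. 2 * k' = 2 * k + 1} = {}"
    and S3: "{k'\<in>{..d}. 2 * k' + 1 = 2 * k + 1} = {k}" and S4: "{k'\<in>{..d}. 2 * k' + 2 = 2 * k + 1} = {}"
    using True by auto presburger+
  have "- ((-1/2)^k * ycoeff 2 k) = 0"
    using zcoeff_ycoeff_coeff_identity[of "2 * k + 1"] unfolding S1 S2 S3 S4 by simp
  then show ?thesis by simp
qed (simp add: ycoeff_def)

end

section \<open>Polynomials in \<open>x\<close> and \<open>\<beta>\<close> of given weighted degree\<close>

definition beta_exps :: "int \<Rightarrow> nat set" where
  "beta_exps m = {k. 2 * int k \<le> m}"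

definition wpoly :: "int \<Rightarrow> (nat \<Rightarrow> real) \<Rightarrow> real \<Rightarrow> real \<Rightarrow> real" where
  "wpoly m c x b = (\<Sum>k\<in>beta_exps m. c k * x ^ nat (m - 2 * int k) * b ^ k)"

definition wpoly_dx :: "int \<Rightarrow> (nat \<Rightarrow> real) \<Rightarrow> real \<Rightarrow> real \<Rightarrow> real" where
  "wpoly_dx m c x b =
     (\<Sum>k\<in>beta_exps m. c k * (real (nat (m - 2 * int k)) * x ^ (nat (m - 2 * int k) - 1)) * b ^ k)"

definition wpoly_db :: "int \<Rightarrow> (nat \<Rightarrow> real) \<Rightarrow> real \<Rightarrow> real \<Rightarrow> real" where
  "wpoly_db m c x b = (\<Sum>k\<in>beta_exps m. c k * x ^ nat (m - 2 * int k) * (real k * b ^ (k - 1)))"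

lemma finite_beta_exps [simp]: "finite (beta_exps m)"
  by (rule finite_subset[of _ "{..nat m}"]) (auto simp: beta_exps_def)

lemma whom_poly_wpoly: "whom_poly m (wpoly m c)"
  unfolding whom_poly_def wpoly_def beta_exps_def by blast

lemma whom_poly_imp_wpoly: "whom_poly m \<psi> \<Longrightarrow> \<exists>c. \<psi> = wpoly m c"
  unfolding whom_poly_def wpoly_def beta_exps_def by (auto intro!: ext)

lemma wpoly_has_real_derivative [derivative_intros]:
  assumes "(X has_real_derivative X') (at t)" "(Y has_real_derivative Y') (at t)"
  shows "((\<lambda>s. wpoly m c (X s) (Y s)) has_real_derivative
           X' * wpoly_dx m c (X t) (Y t) + Y' * wpoly_db m c (X t) (Y t)) (at t)"
proof -
  have "((\<lambda>s. wpoly m c (X s) (Y s)) has_real_derivative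
     (\<Sum>k\<in>beta_exps m. c k * (real (nat (m - 2 * int k)) * X t ^ (nat (m - 2 * int k) - 1) * X') * Y t ^ k
        + c k * X t ^ nat (m - 2 * int k) * (real k * Y t ^ (k - 1) * Y'))) (at t)"
    unfolding wpoly_def by (auto intro!: derivative_eq_intros assms sum.cong simp: algebra_simps)
  moreover have "(\<Sum>k\<in>beta_exps m. c k * (real (nat (m - 2 * int k)) * X t ^ (nat (m - 2 * int k) - 1) * X') * Y t ^ k
        + c k * X t ^ nat (m - 2 * int k) * (real k * Y t ^ (k - 1) * Y'))
      = X' * wpoly_dx m c (X t) (Y t) + Y' * wpoly_db m c (X t) (Y t)"
    unfolding wpoly_dx_def wpoly_db_def sum_distrib_left sum.distrib[symmetric]
    by (intro sum.cong refl) (simp add: algebra_simps)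
  ultimately show ?thesis by simp
qed

lemma deriv_wpoly_x: "deriv (\<lambda>t. wpoly m c t b) x = wpoly_dx m c x b"
  using wpoly_has_real_derivative[of "\<lambda>t. t" 1 x "\<lambda>t. b" 0 m c]
  by (simp add: DERIV_imp_deriv DERIV_ident)

lemma deriv_wpoly_b: "deriv (\<lambda>t. wpoly m c x t) b = wpoly_db m c x b"
  using wpoly_has_real_derivative[of "\<lambda>t. x" 0 b "\<lambda>t. t" 1 m c]
  by (simp add: DERIV_imp_deriv DERIV_ident)

lemma continuous_wpoly [continuous_intros]:
  "continuous F X \<Longrightarrow> continuous F Y \<Longrightarrow> continuous F (\<lambda>t. wpoly m c (X t) (Y t))"
  unfolding wpoly_def by (intro continuous_intros)

lemma sum_at_beta_eq_wpoly:
  fixes G :: "nat \<Rightarrow> real"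
  assumes x: "x \<noteq> 0" and G: "\<And>k. d < 2 * k + j \<Longrightarrow> G k = 0"
  shows "(\<Sum>k\<le>d. G k * x^(d - k) * (b / (2 * x))^k) = x^j * wpoly (int d - int j) (\<lambda>k. G k / 2^k) x b"
proof -
  have "(\<Sum>k\<le>d. G k * x^(d - k) * (b / (2 * x))^k)
      = (\<Sum>k\<in>beta_exps (int d - int j). G k * x^(d - k) * (b / (2 * x))^k)"
    by (rule sum.mono_neutral_right) (use G in \<open>auto simp: beta_exps_def\<close>)
  also have "\<dots> = (\<Sum>k\<in>beta_exps (int d - int j). x^j * (G k / 2^k * x ^ nat (int d - int j - 2 * int k) * b ^ k))"
  proof (rule sum.cong[OF refl])
    fix k assume "k \<in> beta_exps (int d - int j)"
    then have "d - k = j + nat (int d - int j - 2 * int k) + k"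
      by (auto simp: beta_exps_def)
    then show "G k * x^(d - k) * (b / (2 * x))^k = x^j * (G k / 2^k * x ^ nat (int d - int j - 2 * int k) * b ^ k)"
      using x by (simp add: power_add power_divide power_mult_distrib field_simps)
  qed
  finally show ?thesis
    unfolding wpoly_def by (simp add: sum_distrib_left)
qed

lemma beta_exps_shift: "beta_exps m - {0} = Suc ` beta_exps (m - 2)"
proof (rule set_eqI)
  fix k
  show "k \<in> beta_exps m - {0} \<longleftrightarrow> k \<in> Suc ` beta_exps (m - 2)"
    unfolding beta_exps_def by (cases k) auto
qed

lemma wpoly_db_eq_shifted_sum:
  "wpoly_db m c x b = (\<Sum>j\<in>beta_exps (m - 2). c (Suc j) * x ^ nat (m - 2 - 2 * int j) * (real j + 1) * b ^ j)"
proof -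
  have "wpoly_db m c x b = (\<Sum>k\<in>beta_exps m - {0}. c k * x ^ nat (m - 2 * int k) * (real k * b ^ (k - 1)))"
    unfolding wpoly_db_def by (rule sum.mono_neutral_right) auto
  also have "\<dots> = (\<Sum>j\<in>beta_exps (m - 2). c (Suc j) * x ^ nat (m - 2 - 2 * int j) * (real j + 1) * b ^ j)"
    unfolding beta_exps_shift by (subst sum.reindex) (auto simp: algebra_simps)
  finally show ?thesis .
qed

lemma wpoly_euler:
  "x * wpoly_dx m c x b + 3 * wpoly m c x b + b * wpoly_db m c x b
    = (\<Sum>j\<in>beta_exps m. c j * (of_int m + 3 - real j) * x ^ nat (m - 2 * int j) * b ^ j)"
  unfolding wpoly_dx_def wpoly_db_def wpoly_def sum_distrib_left sum.distrib[symmetric]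
proof (intro sum.cong refl)
  fix j assume j: "j \<in> beta_exps m"
  define n where "n = nat (m - 2 * int j)"
  have n: "real n = of_int m - 2 * real j"
    using j by (auto simp: n_def beta_exps_def)
  have xn: "x * (real n * x ^ (n - 1)) = real n * x ^ n"
    by (cases n) auto
  have bj: "b * (real j * b ^ (j - 1)) = real j * b ^ j"
    by (cases j) auto
  have "x * (c j * (real n * x ^ (n - 1)) * b ^ j) + 3 * (c j * x ^ n * b ^ j) + b * (c j * x ^ n * (real j * b ^ (j - 1)))
      = c j * b ^ j * (x * (real n * x ^ (n - 1))) + 3 * (c j * x ^ n * b ^ j) + c j * x ^ n * (b * (real j * b ^ (j - 1)))"
    by (simp add: algebra_simps)
  also have "\<dots> = c j * (of_int m + 3 - real j) * x ^ n * b ^ j"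
    unfolding xn bj unfolding n by (simp add: algebra_simps)
  finally show "x * (c j * (real (nat (m - 2 * int j)) * x ^ (nat (m - 2 * int j) - 1)) * b ^ j)
      + 3 * (c j * x ^ nat (m - 2 * int j) * b ^ j) + b * (c j * x ^ nat (m - 2 * int j) * (real j * b ^ (j - 1)))
      = c j * (of_int m + 3 - real j) * x ^ nat (m - 2 * int j) * b ^ j"
    unfolding n_def .
qed

lemma wpoly_pde_of_coeff_relation:
  assumes rel: "\<And>k. k \<in> beta_exps (int d - 2) \<Longrightarrow> a k * (real d + 1 - real k) + 2 * (real k + 1) * b (Suc k) = 0"
  shows "- 2 * deriv (\<lambda>t. wpoly (int d) b x t) \<beta> =
      x * deriv (\<lambda>t. wpoly (int d - 2) a t \<beta>) x + 3 * wpoly (int d - 2) a x \<beta>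
      + \<beta> * deriv (\<lambda>t. wpoly (int d - 2) a x t) \<beta>"
proof -
  have "- 2 * wpoly_db (int d) b x \<beta>
      = (\<Sum>j\<in>beta_exps (int d - 2). a j * (real d + 1 - real j) * x ^ nat (int d - 2 - 2 * int j) * \<beta> ^ j)"
    unfolding wpoly_db_eq_shifted_sum sum_distrib_left
  proof (intro sum.cong refl)
    fix j assume "j \<in> beta_exps (int d - 2)"
    then have aj: "a j * (real d + 1 - real j) = - (2 * (real j + 1) * b (Suc j))"
      using rel[of j] by linarith
    show "- 2 * (b (Suc j) * x ^ nat (int d - 2 - 2 * int j) * (real j + 1) * \<beta> ^ j) =
        a j * (real d + 1 - real j) * x ^ nat (int d - 2 - 2 * int j) * \<beta> ^ j"
      unfolding aj by (simp add: algebra_simps)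
  qed
  then show ?thesis
    unfolding deriv_wpoly_x deriv_wpoly_b wpoly_euler by (simp add: algebra_simps)
qed

section \<open>Normal forms\<close>

definition nform :: "(real \<Rightarrow> real \<Rightarrow> real) \<Rightarrow> (real \<Rightarrow> real \<Rightarrow> real) \<Rightarrow> (real \<Rightarrow> real \<Rightarrow> real) \<Rightarrow> vfield" where
  "nform \<psi>1 \<psi>2 \<psi>3 \<xi> = vector [(\<xi>$1)^2 * \<psi>1 (\<xi>$1) (beta \<xi>),
      \<xi>$1 * \<xi>$2 * \<psi>1 (\<xi>$1) (beta \<xi>) + \<xi>$1 * \<psi>2 (\<xi>$1) (beta \<xi>),
      1/2 * (\<xi>$2)^2 * \<psi>1 (\<xi>$1) (beta \<xi>) + \<xi>$2 * \<psi>2 (\<xi>$1) (beta \<xi>) + \<psi>3 (\<xi>$1) (beta \<xi>)]"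

lemma continuous_nform_wpoly_nth:
  assumes "continuous F g"
  shows "continuous F (\<lambda>t. nform (wpoly m1 c1) (wpoly m2 c2) (wpoly m3 c3) (g t) $ i)"
proof -
  have "i = 1 \<or> i = 2 \<or> i = 3" by (rule exhaust_3)
  then show ?thesis
    unfolding nform_def beta_def by (elim disjE) (simp only: vector_3; intro continuous_intros assms)+
qed

lemma continuous_at_vanishing_nearby:
  fixes F :: "real \<Rightarrow> real"
  assumes "continuous (at a) F" "\<And>t. t \<noteq> a \<Longrightarrow> F t = 0"
  shows "F a = 0"
proof -
  have "(F \<longlongrightarrow> F a) (at a)"
    using assms(1) by (simp add: continuous_at)
  moreover have "(F \<longlongrightarrow> 0) (at a)"
    by (rule tendsto_eventually) (auto simp: eventually_at_filter assms(2))
  ultimately show ?thesis by (rule LIM_unique)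
qed

context ad_kernel_divfree
begin

definition \<psi>1 :: "real \<Rightarrow> real \<Rightarrow> real" where
  "\<psi>1 = wpoly (int d - 2) (\<lambda>k. ycoeff 1 k / 2^k)"

definition \<psi>2 :: "real \<Rightarrow> real \<Rightarrow> real" where
  "\<psi>2 = wpoly (int d - 1) (\<lambda>k. ycoeff 2 k / 2^k)"

definition \<psi>3 :: "real \<Rightarrow> real \<Rightarrow> real" where
  "\<psi>3 = wpoly (int d) (\<lambda>k. ycoeff 3 k / 2^k)"

text \<open>For \<open>x \<noteq> 0\<close> the flow carries \<open>\<xi>\<close> in time \<open>-y/x\<close> to \<open>(x, 0, \<beta>/(2x))\<close>,
  where \<open>h\<close> is known from its coefficients on the plane \<open>y = 0\<close>.\<close>

lemma h_eq_nform_off_x0: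
  assumes x: "\<xi>$1 \<noteq> 0"
  shows "h \<xi> = nform \<psi>1 \<psi>2 \<psi>3 \<xi>"
proof -
  define x y s where "x = \<xi>$1" and "y = \<xi>$2" and "s = - y / x"
  have x0: "x \<noteq> 0" using x by (simp add: x_def)
  have "nflow \<xi> s = vector [x, 0, beta \<xi> / (2 * x)]"
    using x0 unfolding nflow_def beta_def s_def x_def[symmetric] y_def[symmetric]
    by (simp add: field_simps power2_eq_square)
  moreover have "h (vector [x, 0, b / (2 * x)]) = vector [x^2 * \<psi>1 x b, x * \<psi>2 x b, \<psi>3 x b]" for b
  proof -
    have "h (vector [x, 0, b / (2 * x)]) $ 1 = x^2 * \<psi>1 x b"
      unfolding h_at_y0 \<psi>1_def using sum_at_beta_eq_wpoly[where j=2] x0 ycoeff1_eq_0 by simp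
    moreover have "h (vector [x, 0, b / (2 * x)]) $ 2 = x * \<psi>2 x b"
      unfolding h_at_y0 \<psi>2_def using sum_at_beta_eq_wpoly[where j=1] x0 ycoeff2_eq_0 by simp
    moreover have "h (vector [x, 0, b / (2 * x)]) $ 3 = \<psi>3 x b"
      unfolding h_at_y0 \<psi>3_def using sum_at_beta_eq_wpoly[where j=0] x0 ycoeff3_eq_0 by simp
    ultimately show ?thesis
      by (simp add: vec_eq_iff forall_3)
  qed
  moreover have "h \<xi> = nflow (h (nflow \<xi> s)) (- s)"
    by (simp add: h_nflow nflow_add nflow_0)
  ultimately show ?thesis
    using x0 unfolding nflow_def nform_def x_def[symmetric] y_def[symmetric] s_def
    by (simp add: field_simps power2_eq_square)
qed

lemma h_eq_nform: "h \<xi> = nform \<psi>1 \<psi>2 \<psi>3 \<xi>"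
proof (cases "\<xi>$1 = 0")
  case True
  have "h \<xi> $ i = nform \<psi>1 \<psi>2 \<psi>3 \<xi> $ i" for i
  proof -
    define F where "F t = h (\<xi> + t *\<^sub>R axis 1 1) $ i - nform \<psi>1 \<psi>2 \<psi>3 (\<xi> + t *\<^sub>R axis 1 1) $ i" for t
    have "F 0 = 0"
    proof (rule continuous_at_vanishing_nearby[where F=F])
      have line: "continuous (at 0) (\<lambda>t. \<xi> + t *\<^sub>R axis 1 1)"
        by (intro continuous_intros)
      have "continuous (at 0) (\<lambda>t. h (\<xi> + t *\<^sub>R axis 1 1) $ i)"
        using continuous_at_compose[OF line hom_poly3_continuous[OF F3_nth[OF F3]]] by (simp add: o_def)
      then show "continuous (at 0) F"
        unfolding F_def \<psi>1_def \<psi>2_def \<psi>3_def by (intro continuous_diff continuous_nform_wpoly_nth line)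
    next
      fix t :: real
      assume "t \<noteq> 0"
      then have "(\<xi> + t *\<^sub>R axis 1 1) $ 1 \<noteq> 0"
        using True by simp
      then show "F t = 0"
        unfolding F_def using h_eq_nform_off_x0 by simp
    qed
    then show ?thesis by (simp add: F_def)
  qed
  then show ?thesis by (simp add: vec_eq_iff)
qed (rule h_eq_nform_off_x0)

lemma \<psi>_pde:
  "- 2 * deriv (\<lambda>t. \<psi>3 x t) b = x * deriv (\<lambda>t. \<psi>1 t b) x + 3 * \<psi>1 x b + b * deriv (\<lambda>t. \<psi>1 x t) b"
  unfolding \<psi>1_def \<psi>3_def
proof (rule wpoly_pde_of_coeff_relation)
  fix k assume "k \<in> beta_exps (int d - 2)"
  then have "ycoeff 1 k * (real d - real k + 1) + (real k + 1) * ycoeff 3 (Suc k) = 0"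
    by (intro ycoeff_divergence_relation) (auto simp: beta_exps_def)
  moreover have "ycoeff 1 k / 2^k * (real d + 1 - real k) + 2 * (real k + 1) * (ycoeff 3 (Suc k) / 2^Suc k)
      = (ycoeff 1 k * (real d - real k + 1) + (real k + 1) * ycoeff 3 (Suc k)) / 2^k"
    by (simp add: field_simps)
  ultimately show "ycoeff 1 k / 2^k * (real d + 1 - real k) + 2 * (real k + 1) * (ycoeff 3 (Suc k) / 2^Suc k) = 0"
    by simp
qed

end

lemma hpoly3_mult_wpoly:
  assumes "hpoly3 a f" "int a + m = int d"
  shows "hpoly3 d (\<lambda>\<xi>. f \<xi> * wpoly m c (\<xi>$1) (beta \<xi>))"
proof -
  have "hpoly3 d (\<lambda>\<xi>. \<Sum>k\<in>beta_exps m. c k * (f \<xi> * ((\<xi>$1) ^ nat (m - 2 * int k) * (beta \<xi>) ^ k)))"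
  proof (intro hpoly3_sum hpoly3.scale finite_beta_exps)
    fix k assume "k \<in> beta_exps m"
    moreover have "hpoly3 (a + (1 * nat (m - 2 * int k) + 2 * k)) (\<lambda>\<xi>. f \<xi> * ((\<xi>$1) ^ nat (m - 2 * int k) * (beta \<xi>) ^ k))"
      by (intro hpoly3_mult assms(1) hpoly3_power hpoly3_x hpoly3_beta)
    ultimately show "hpoly3 d (\<lambda>\<xi>. f \<xi> * ((\<xi>$1) ^ nat (m - 2 * int k) * (beta \<xi>) ^ k))"
      using assms(2) by (auto simp: beta_exps_def elim!: back_subst[of "\<lambda>n. hpoly3 n _"])
  qed
  then show ?thesis
    unfolding wpoly_def sum_distrib_left by (simp add: algebra_simps)
qed

lemma nform_wpoly_in_F3:
  "nform (wpoly (int d - 2) c1) (wpoly (int d - 1) c2) (wpoly (int d) c3) \<in> F3 d"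
  unfolding F3_def
proof (clarify)
  fix i :: 3
  let ?w1 = "wpoly (int d - 2) c1" and ?w2 = "wpoly (int d - 1) c2" and ?w3 = "wpoly (int d) c3"
  have xx: "hpoly3 2 (\<lambda>\<xi>. (\<xi>$1)^2)" and xy: "hpoly3 2 (\<lambda>\<xi>. \<xi>$1 * \<xi>$2)"
    and yy: "hpoly3 2 (\<lambda>\<xi>. 1/2 * (\<xi>$2)^2)"
    using hpoly3_power[OF hpoly3_x, of 2] hpoly3_mult[OF hpoly3_x hpoly3_y]
      hpoly3.scale[OF hpoly3_power[OF hpoly3_y, of 2], of "1/2"] by (simp_all add: numeral_2_eq_2)
  have "hpoly3 d (\<lambda>\<xi>. (\<xi>$1)^2 * ?w1 (\<xi>$1) (beta \<xi>))"
    by (rule hpoly3_mult_wpoly[OF xx]) simp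
  moreover have "hpoly3 d (\<lambda>\<xi>. \<xi>$1 * \<xi>$2 * ?w1 (\<xi>$1) (beta \<xi>) + \<xi>$1 * ?w2 (\<xi>$1) (beta \<xi>))"
    by (rule hpoly3.add[OF hpoly3_mult_wpoly[OF xy] hpoly3_mult_wpoly[OF hpoly3_x]]) auto
  moreover have "hpoly3 d (\<lambda>\<xi>. 1/2 * (\<xi>$2)^2 * ?w1 (\<xi>$1) (beta \<xi>) + \<xi>$2 * ?w2 (\<xi>$1) (beta \<xi>)
      + 1 * ?w3 (\<xi>$1) (beta \<xi>))"
    by (rule hpoly3.add[OF hpoly3.add[OF hpoly3_mult_wpoly[OF yy] hpoly3_mult_wpoly[OF hpoly3_y]]
          hpoly3_mult_wpoly[OF hpoly3_const]]) auto
  moreover have "i = 1 \<or> i = 2 \<or> i = 3" by (rule exhaust_3)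
  ultimately show "hom_poly3 d (\<lambda>\<xi>. nform ?w1 ?w2 ?w3 \<xi> $ i)"
    by (auto simp: nform_def dest!: hpoly3_imp_hom_poly3)
qed

text \<open>Along \<open>N\<^sup>T \<xi> = (0, x, y)\<close> the quantity \<open>\<beta>\<close> changes only to second order.\<close>

lemma nform_wpoly_ad_kernel:
  "ad (transpose Nmat) (nform (wpoly m1 c1) (wpoly m2 c2) (wpoly m3 c3)) = (\<lambda>_. 0)"
proof (rule ext)
  fix \<xi> :: vec3
  let ?h = "nform (wpoly m1 c1) (wpoly m2 c2) (wpoly m3 c3)"
  define x y where "x = \<xi>$1" and "y = \<xi>$2"
  have line: "\<xi> + t *\<^sub>R vector [0, x, y] = vector [x, y + t * x, \<xi>$3 + t * y]" for t
    by (simp add: vec_eq_iff forall_3 x_def y_def)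
  have beta_line: "beta (vector [x, y + t * x, \<xi>$3 + t * y]) = beta \<xi> - t^2 * x^2" for t
    by (simp add: beta_def x_def y_def algebra_simps power2_eq_square)
  have D: "((\<lambda>t. ?h (\<xi> + t *\<^sub>R vector [0, x, y]) $ i) has_real_derivative vector [0, ?h \<xi> $ 1, ?h \<xi> $ 2] $ i) (at 0)"
    for i
  proof -
    have "i = 1 \<or> i = 2 \<or> i = 3" by (rule exhaust_3)
    then show ?thesis
      unfolding line nform_def beta_line
      by (elim disjE) (auto intro!: derivative_eq_intros simp: x_def y_def power2_eq_square algebra_simps)
  qed
  have "Dfield ?h \<xi> (vector [0, x, y]) = vector [0, ?h \<xi> $ 1, ?h \<xi> $ 2]"
    unfolding Dfield_def using D by (simp add: vec_eq_iff DERIV_imp_deriv)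
  then show "ad (transpose Nmat) ?h \<xi> = 0"
    unfolding ad_def transpose_Nmat_mult x_def y_def by simp
qed

lemma nform_wpoly_divergence:
  assumes pde: "\<And>x b. - 2 * deriv (\<lambda>t. wpoly m3 c3 x t) b =
      x * deriv (\<lambda>t. wpoly m1 c1 t b) x + 3 * wpoly m1 c1 x b + b * deriv (\<lambda>t. wpoly m1 c1 x t) b"
  shows "divergence (nform (wpoly m1 c1) (wpoly m2 c2) (wpoly m3 c3)) \<xi> = 0"
proof -
  let ?h = "nform (wpoly m1 c1) (wpoly m2 c2) (wpoly m3 c3)"
  define x y z where "x = \<xi>$1" and "y = \<xi>$2" and "z = \<xi>$3"
  define \<beta> where "\<beta> = 2 * z * x - y^2"
  have \<xi>: "\<xi> = vector [x, y, z]"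
    by (simp add: vec_eq_iff forall_3 x_def y_def z_def)
  have "((\<lambda>t. ?h (\<xi> + t *\<^sub>R axis 1 1) $ 1) has_real_derivative
      2 * x * wpoly m1 c1 x \<beta> + x^2 * (wpoly_dx m1 c1 x \<beta> + 2 * z * wpoly_db m1 c1 x \<beta>)) (at 0)"
    unfolding \<xi> vector3_add_axis nform_def beta_def \<beta>_def
    by (auto intro!: derivative_eq_intros simp: algebra_simps power2_eq_square)
  moreover have "((\<lambda>t. ?h (\<xi> + t *\<^sub>R axis 2 1) $ 2) has_real_derivative
      x * wpoly m1 c1 x \<beta> - 2 * x * y^2 * wpoly_db m1 c1 x \<beta> - 2 * x * y * wpoly_db m2 c2 x \<beta>) (at 0)"
    unfolding \<xi> vector3_add_axis nform_def beta_def \<beta>_def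
    by (auto intro!: derivative_eq_intros simp: algebra_simps power2_eq_square)
  moreover have "((\<lambda>t. ?h (\<xi> + t *\<^sub>R axis 3 1) $ 3) has_real_derivative
      x * y^2 * wpoly_db m1 c1 x \<beta> + 2 * x * y * wpoly_db m2 c2 x \<beta> + 2 * x * wpoly_db m3 c3 x \<beta>) (at 0)"
    unfolding \<xi> vector3_add_axis nform_def beta_def \<beta>_def
    by (auto intro!: derivative_eq_intros simp: algebra_simps power2_eq_square)
  ultimately have "divergence ?h \<xi>
      = x * (x * wpoly_dx m1 c1 x \<beta> + 3 * wpoly m1 c1 x \<beta> + \<beta> * wpoly_db m1 c1 x \<beta> + 2 * wpoly_db m3 c3 x \<beta>)"
    unfolding divergence_def sum_3 by (simp add: DERIV_imp_deriv \<beta>_def algebra_simps power2_eq_square)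
  also have "\<dots> = 0"
    using pde[of x \<beta>] unfolding deriv_wpoly_x deriv_wpoly_b by simp
  finally show ?thesis .
qed

definition divfree_cokernel :: "nat \<Rightarrow> vfield set" where
  "divfree_cokernel d = {h \<in> F3 d. ad (transpose Nmat) h = (\<lambda>_. 0)} \<inter> V3 d"

lemma nform_wpoly_in_divfree_cokernel:
  assumes "\<And>x b. - 2 * deriv (\<lambda>t. wpoly (int d) c3 x t) b =
      x * deriv (\<lambda>t. wpoly (int d - 2) c1 t b) x + 3 * wpoly (int d - 2) c1 x b
      + b * deriv (\<lambda>t. wpoly (int d - 2) c1 x t) b"
  shows "nform (wpoly (int d - 2) c1) (wpoly (int d - 1) c2) (wpoly (int d) c3) \<in> divfree_cokernel d"
  unfolding divfree_cokernel_def V3_def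
  using nform_wpoly_in_F3 nform_wpoly_ad_kernel nform_wpoly_divergence[OF assms] by blast

lemma ad_kernel_divfree_if_in_divfree_cokernel:
  "h \<in> divfree_cokernel d \<Longrightarrow> ad_kernel_divfree d h"
  unfolding divfree_cokernel_def V3_def by unfold_locales auto

lemma divfree_cokernel_eq:
  "divfree_cokernel d =
    {h. \<exists>\<psi>1 \<psi>2 \<psi>3. whom_poly (int d - 2) \<psi>1 \<and> whom_poly (int d - 1) \<psi>2 \<and> whom_poly (int d) \<psi>3 \<and>
        (\<forall>x b. - 2 * deriv (\<lambda>t. \<psi>3 x t) b =
            x * deriv (\<lambda>t. \<psi>1 t b) x + 3 * \<psi>1 x b + b * deriv (\<lambda>t. \<psi>1 x t) b) \<and>
        h = nform \<psi>1 \<psi>2 \<psi>3}"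
  (is "_ = ?S")
proof
  show "divfree_cokernel d \<subseteq> ?S"
  proof
    fix h assume "h \<in> divfree_cokernel d"
    then interpret ad_kernel_divfree d h
      by (rule ad_kernel_divfree_if_in_divfree_cokernel)
    show "h \<in> ?S"
      by (intro CollectI exI[of _ \<psi>1] exI[of _ \<psi>2] exI[of _ \<psi>3] conjI allI \<psi>_pde ext h_eq_nform)
        (simp_all add: \<psi>1_def \<psi>2_def \<psi>3_def whom_poly_wpoly)
  qed
  show "?S \<subseteq> divfree_cokernel d"
    by (force dest!: whom_poly_imp_wpoly intro: nform_wpoly_in_divfree_cokernel)
qed

section \<open>A basis and the dimension\<close>

definition pde_coeff :: "nat \<Rightarrow> nat \<Rightarrow> real" where
  "pde_coeff d k = - (real d + 1 - real k) / (2 * (real k + 1))"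

text \<open>Basis vector \<open>0\<close> has \<open>\<psi>\<^sub>3 = x^d\<close>; vector \<open>2k + 1\<close> has \<open>\<psi>\<^sub>2 = x^(d-1-2k) \<beta>^k\<close>;
  vector \<open>2k + 2\<close> has \<open>\<psi>\<^sub>1 = x^(d-2-2k) \<beta>^k\<close> together with the multiple of
  \<open>x^(d-2-2k) \<beta>^(k+1)\<close> as \<open>\<psi>\<^sub>3\<close> forced by the constraint.\<close>

definition cokernel_basis :: "nat \<Rightarrow> nat \<Rightarrow> vfield" where
  "cokernel_basis d n =
    (if n = 0 then nform (wpoly (int d - 2) (\<lambda>_. 0)) (wpoly (int d - 1) (\<lambda>_. 0)) (wpoly (int d) (\<lambda>j. of_bool (j = 0)))
     else if odd n then nform (wpoly (int d - 2) (\<lambda>_. 0)) (wpoly (int d - 1) (\<lambda>j. of_bool (j = (n - 1) div 2)))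
       (wpoly (int d) (\<lambda>_. 0))
     else nform (wpoly (int d - 2) (\<lambda>j. of_bool (j = (n - 2) div 2))) (wpoly (int d - 1) (\<lambda>_. 0))
       (wpoly (int d) (\<lambda>j. of_bool (j = Suc ((n - 2) div 2)) * pde_coeff d ((n - 2) div 2))))"

lemma wpoly_zero: "wpoly m (\<lambda>_. 0) = (\<lambda>_ _. 0)"
  by (simp add: wpoly_def fun_eq_iff)

lemma wpoly_delta:
  "wpoly m (\<lambda>j. of_bool (j = k) * a) x b = (if k \<in> beta_exps m then a * x ^ nat (m - 2 * int k) * b ^ k else 0)"
proof -
  have "wpoly m (\<lambda>j. of_bool (j = k) * a) x b = (\<Sum>j\<in>beta_exps m. if j = k then a * x ^ nat (m - 2 * int k) * b ^ k else 0)"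
    unfolding wpoly_def by (intro sum.cong) auto
  then show ?thesis by simp
qed

lemma wpoly_delta1:
  "wpoly m (\<lambda>j. of_bool (j = k)) x b = (if k \<in> beta_exps m then x ^ nat (m - 2 * int k) * b ^ k else 0)"
  using wpoly_delta[of m k 1] by simp

lemma wpoly_eq_sum_delta: "wpoly m c x b = (\<Sum>k\<in>beta_exps m. c k * wpoly m (\<lambda>j. of_bool (j = k)) x b)"
  unfolding wpoly_delta1 by (simp add: wpoly_def mult.assoc)

lemma cokernel_basis_0: "cokernel_basis d 0 = nform (\<lambda>_ _. 0) (\<lambda>_ _. 0) (wpoly (int d) (\<lambda>j. of_bool (j = 0)))"
  by (simp add: cokernel_basis_def wpoly_zero)

lemma cokernel_basis_odd:
  "cokernel_basis d (2 * k + 1) = nform (\<lambda>_ _. 0) (wpoly (int d - 1) (\<lambda>j. of_bool (j = k))) (\<lambda>_ _. 0)"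
  by (simp add: cokernel_basis_def wpoly_zero)

lemma cokernel_basis_even:
  "cokernel_basis d (2 * k + 2) =
     nform (wpoly (int d - 2) (\<lambda>j. of_bool (j = k))) (\<lambda>_ _. 0) (wpoly (int d) (\<lambda>j. of_bool (j = Suc k) * pde_coeff d k))"
  by (simp add: cokernel_basis_def wpoly_zero)

lemma cokernel_basis_in_divfree_cokernel: "cokernel_basis d n \<in> divfree_cokernel d"
  unfolding cokernel_basis_def
  by (auto intro!: nform_wpoly_in_divfree_cokernel wpoly_pde_of_coeff_relation simp: pde_coeff_def field_simps)

lemma wpoly_split_constant_term:
  assumes "0 \<le> m"
  shows "wpoly m c x b = c 0 * wpoly m (\<lambda>j. of_bool (j = 0)) x b
    + (\<Sum>k\<in>beta_exps (m - 2). wpoly m (\<lambda>j. of_bool (j = Suc k) * c (Suc k)) x b)"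
proof -
  have zero: "0 \<in> beta_exps m"
    using assms by (simp add: beta_exps_def)
  have "wpoly m c x b = c 0 * x ^ nat m + (\<Sum>k\<in>beta_exps m - {0}. c k * x ^ nat (m - 2 * int k) * b ^ k)"
    unfolding wpoly_def by (subst sum.remove[OF finite_beta_exps zero]) simp
  also have "(\<Sum>k\<in>beta_exps m - {0}. c k * x ^ nat (m - 2 * int k) * b ^ k)
      = (\<Sum>k\<in>beta_exps (m - 2). wpoly m (\<lambda>j. of_bool (j = Suc k) * c (Suc k)) x b)"
    unfolding beta_exps_shift by (subst sum.reindex) (auto simp: wpoly_delta beta_exps_def intro!: sum.cong)
  finally show ?thesis
    using zero by (simp add: wpoly_delta1)
qed

lemma sum_fun_apply: "(\<Sum>i\<in>I. f i) \<xi> = (\<Sum>i\<in>I. f i \<xi>)"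
  by (induction I rule: infinite_finite_induct) auto

lemma nform_wpoly_eq_basis_combination:
  assumes rel: "\<And>k. k \<in> beta_exps (int d - 2) \<Longrightarrow> b (Suc k) = a k * pde_coeff d k"
  shows "nform (wpoly (int d - 2) a) (wpoly (int d - 1) c) (wpoly (int d) b)
    = fscale (b 0) (cokernel_basis d 0) + (\<Sum>k\<in>beta_exps (int d - 1). fscale (c k) (cokernel_basis d (2 * k + 1)))
      + (\<Sum>k\<in>beta_exps (int d - 2). fscale (a k) (cokernel_basis d (2 * k + 2)))"
    (is "?h = ?comb")
proof
  fix \<xi> :: vec3
  define x y \<beta> where "x = \<xi>$1" and "y = \<xi>$2" and "\<beta> = beta \<xi>"
  let ?\<delta> = "\<lambda>k j. of_bool (j = k) :: real"
  have b: "wpoly (int d) b x \<beta> = b 0 * wpoly (int d) (?\<delta> 0) x \<beta>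
      + (\<Sum>k\<in>beta_exps (int d - 2). a k * wpoly (int d) (\<lambda>j. of_bool (j = Suc k) * pde_coeff d k) x \<beta>)"
    by (subst wpoly_split_constant_term[OF of_nat_0_le_iff]) (auto simp: wpoly_delta rel beta_exps_def intro!: sum.cong)
  have "?comb \<xi> = b 0 *\<^sub>R vector [0, 0, wpoly (int d) (?\<delta> 0) x \<beta>]
      + (\<Sum>k\<in>beta_exps (int d - 1). c k *\<^sub>R vector [0, x * wpoly (int d - 1) (?\<delta> k) x \<beta>, y * wpoly (int d - 1) (?\<delta> k) x \<beta>])
      + (\<Sum>k\<in>beta_exps (int d - 2). a k *\<^sub>R vector [x^2 * wpoly (int d - 2) (?\<delta> k) x \<beta>,
          x * y * wpoly (int d - 2) (?\<delta> k) x \<beta>,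
          1/2 * y^2 * wpoly (int d - 2) (?\<delta> k) x \<beta> + wpoly (int d) (\<lambda>j. of_bool (j = Suc k) * pde_coeff d k) x \<beta>])"
    unfolding sum_fun_apply fscale_def plus_fun_apply cokernel_basis_0 cokernel_basis_odd cokernel_basis_even
      nform_def x_def y_def \<beta>_def
    by simp
  also have "\<dots> = ?h \<xi>"
    unfolding nform_def x_def[symmetric] y_def[symmetric] \<beta>_def[symmetric] b
    by (subst (1 2 3) wpoly_eq_sum_delta[of "int d - 2" a], subst (1 2) wpoly_eq_sum_delta[of "int d - 1" c])
      (simp add: vec_eq_iff forall_3 sum_distrib_left sum.distrib algebra_simps)
  finally show "?h \<xi> = ?comb \<xi>" ..
qed

lemma (in ad_kernel_divfree) h_eq_basis_combination:
  "h = fscale (ycoeff 3 0) (cokernel_basis d 0)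
     + (\<Sum>k\<in>beta_exps (int d - 1). fscale (ycoeff 2 k / 2^k) (cokernel_basis d (2 * k + 1)))
     + (\<Sum>k\<in>beta_exps (int d - 2). fscale (ycoeff 1 k / 2^k) (cokernel_basis d (2 * k + 2)))"
proof -
  have "ycoeff 3 (Suc k) / 2^Suc k = ycoeff 1 k / 2^k * pde_coeff d k" if "k \<in> beta_exps (int d - 2)" for k
  proof -
    have "ycoeff 1 k * (real d - real k + 1) + (real k + 1) * ycoeff 3 (Suc k) = 0"
      using that by (intro ycoeff_divergence_relation) (auto simp: beta_exps_def)
    then have "(real k + 1) * ycoeff 3 (Suc k) = - (ycoeff 1 k * (real d - real k + 1))"
      by linarith
    then have b: "ycoeff 3 (Suc k) = - (ycoeff 1 k * (real d - real k + 1)) / (real k + 1)"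
      by (simp add: eq_divide_eq algebra_simps)
    show ?thesis
      unfolding pde_coeff_def b by (simp add: field_simps)
  qed
  then show ?thesis
    using nform_wpoly_eq_basis_combination[of d "\<lambda>k. ycoeff 3 k / 2^k" "\<lambda>k. ycoeff 1 k / 2^k" "\<lambda>k. ycoeff 2 k / 2^k"]
    by (simp add: fun_eq_iff h_eq_nform \<psi>1_def \<psi>2_def \<psi>3_def)
qed

lemma nform_at_y0: "nform \<psi>1 \<psi>2 \<psi>3 (vector [1, 0, s/2]) = vector [\<psi>1 1 s, \<psi>2 1 s, \<psi>3 1 s]"
  by (simp add: nform_def beta_def)

lemma cokernel_basis_at_y0:
  assumes "n \<le> d"
  shows "cokernel_basis d n (vector [1, 0, s/2]) =
    (if n = 0 then vector [0, 0, 1]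
     else if odd n then vector [0, s ^ ((n - 1) div 2), 0]
     else vector [s ^ ((n - 2) div 2), 0, pde_coeff d ((n - 2) div 2) * s ^ Suc ((n - 2) div 2)])"
proof -
  consider "n = 0" | "odd n" | "n \<noteq> 0" "even n" by blast
  then show ?thesis
  proof cases
    case 1
    moreover have "0 \<in> beta_exps (int d)" by (simp add: beta_exps_def)
    ultimately show ?thesis by (simp add: cokernel_basis_def nform_at_y0 wpoly_zero wpoly_delta1)
  next
    case 2
    moreover from this have "n \<noteq> 0" "(n - 1) div 2 \<in> beta_exps (int d - 1)"
      using assms by (auto simp: beta_exps_def elim!: oddE)
    ultimately show ?thesis by (simp add: cokernel_basis_def nform_at_y0 wpoly_zero wpoly_delta1)
  next
    case 3
    moreover from this have "(n - 2) div 2 \<in> beta_exps (int d - 2)" "Suc ((n - 2) div 2) \<in> beta_exps (int d)"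
      using assms by (auto simp: beta_exps_def elim!: evenE)
    ultimately show ?thesis by (simp add: cokernel_basis_def nform_at_y0 wpoly_zero wpoly_delta wpoly_delta1)
  qed
qed

lemma sum_guarded_powers_zero_imp_coeff_zero:
  fixes w :: "nat \<Rightarrow> real"
  assumes "\<And>s. (\<Sum>n\<le>d. w n * (if P n then s ^ e n else 0)) = 0" "inj_on e {n. n \<le> d \<and> P n}"
    and "n \<le> d" "P n"
  shows "w n = 0"
proof (rule power_sum_zero_imp_coeff_zero_inj[where K="{n. n \<le> d \<and> P n}" and e=e])
  fix s :: real
  show "(\<Sum>n\<in>{n. n \<le> d \<and> P n}. w n * s ^ e n) = 0"
    using assms(1)[of s] by (simp add: sum.inter_filter[symmetric] if_distrib cong: if_cong)
qed (use assms(2-) in auto)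

lemma cokernel_basis_independent:
  assumes "(\<Sum>n\<le>d. fscale (w n) (cokernel_basis d n)) = 0" "n \<le> d"
  shows "w n = 0"
proof -
  have "(\<Sum>n\<le>d. w n *\<^sub>R cokernel_basis d n (vector [1, 0, s/2])) = 0" for s
    using fun_cong[OF assms(1), of "vector [1, 0, s/2]"] by (simp add: sum_fun_apply fscale_def)
  then have at_y0: "(\<Sum>n\<le>d. w n * f n) = 0"
    if "\<And>n. n \<le> d \<Longrightarrow> cokernel_basis d n (vector [1, 0, s/2]) $ i = f n" for s i f
  proof -
    have "(\<Sum>n\<le>d. w n * f n) = (\<Sum>n\<le>d. w n *\<^sub>R cokernel_basis d n (vector [1, 0, s/2])) $ i"
      unfolding sum_component by (simp add: that)
    then show ?thesis
      using \<open>\<And>s. (\<Sum>n\<le>d. w n *\<^sub>R cokernel_basis d n (vector [1, 0, s/2])) = 0\<close> by simp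
  qed
  have c1: "(\<Sum>n\<le>d. w n * (if n \<noteq> 0 \<and> even n then s ^ ((n - 2) div 2) else 0)) = 0"
    and c2: "(\<Sum>n\<le>d. w n * (if odd n then s ^ ((n - 1) div 2) else 0)) = 0"
    and c3: "(\<Sum>n\<le>d. w n * (if n = 0 then s ^ 0 else 0)) = 0" for s
    by (rule at_y0[of s 1], simp add: cokernel_basis_at_y0,
        rule at_y0[of s 2], simp add: cokernel_basis_at_y0,
        rule at_y0[of 0 3], simp add: cokernel_basis_at_y0[where s=0, simplified])
  consider "n = 0" | "odd n" | "n \<noteq> 0" "even n" by blast
  then show ?thesis
  proof cases
    case 1
    then show ?thesis
      using sum_guarded_powers_zero_imp_coeff_zero[OF c3, of n] by (simp add: inj_on_def)
  next
    case 2
    moreover have "inj_on (\<lambda>n. (n - 1) div 2) {n. n \<le> d \<and> odd n}"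
      by (auto simp: inj_on_def elim!: oddE)
    ultimately show ?thesis
      using sum_guarded_powers_zero_imp_coeff_zero[OF c2, of n] assms(2) by simp
  next
    case 3
    moreover have "inj_on (\<lambda>n. (n - 2) div 2) {n. n \<le> d \<and> n \<noteq> 0 \<and> even n}"
      by (auto simp: inj_on_def elim!: evenE)
    ultimately show ?thesis
      using sum_guarded_powers_zero_imp_coeff_zero[OF c1, of n] assms(2) by simp
  qed
qed

interpretation fscale: vector_space fscale
  by unfold_locales (auto simp: fscale_def fun_eq_iff scaleR_add_right scaleR_add_left)

lemma inj_on_cokernel_basis: "inj_on (cokernel_basis d) {..d}"
proof (rule inj_onI, rule ccontr)
  fix n m assume n: "n \<in> {..d}" and m: "m \<in> {..d}" and eq: "cokernel_basis d n = cokernel_basis d m" and "n \<noteq> m"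
  define w where "w i = (if i = n then 1 else if i = m then -1 else (0::real))" for i
  have "(\<Sum>i\<le>d. fscale (w i) (cokernel_basis d i)) = (\<Sum>i\<in>{n, m}. fscale (w i) (cokernel_basis d i))"
    by (rule sum.mono_neutral_right) (use n m in \<open>auto simp: w_def fscale_def fun_eq_iff\<close>)
  also have "\<dots> = 0"
    using \<open>n \<noteq> m\<close> eq by (simp add: w_def fscale_def fun_eq_iff)
  finally have "w n = 0"
    using n by (intro cokernel_basis_independent) auto
  then show False by (simp add: w_def)
qed

lemma independent_cokernel_basis: "fscale.independent (cokernel_basis d ` {..d})"
proof
  assume "fscale.dependent (cokernel_basis d ` {..d})"
  then obtain u where u: "\<exists>v\<in>cokernel_basis d ` {..d}. u v \<noteq> 0"
    and "(\<Sum>v\<in>cokernel_basis d ` {..d}. fscale (u v) v) = 0"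
    using fscale.dependent_finite by auto
  then have "(\<Sum>n\<le>d. fscale (u (cokernel_basis d n)) (cokernel_basis d n)) = 0"
    by (simp add: sum.reindex[OF inj_on_cokernel_basis])
  then show False
    using u cokernel_basis_independent by fastforce
qed

lemma divfree_cokernel_subset_span: "divfree_cokernel d \<subseteq> fscale.span (cokernel_basis d ` {..d})"
proof
  fix h assume "h \<in> divfree_cokernel d"
  then interpret ad_kernel_divfree d h
    by (rule ad_kernel_divfree_if_in_divfree_cokernel)
  have "cokernel_basis d n \<in> fscale.span (cokernel_basis d ` {..d})" if "n \<le> d" for n
    using that by (intro fscale.span_base) auto
  then show "h \<in> fscale.span (cokernel_basis d ` {..d})"
    by (subst h_eq_basis_combination) (intro fscale.span_add fscale.span_scale fscale.span_sum; auto simp: beta_exps_def)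
qed

lemma dim_divfree_cokernel: "fscale.dim (divfree_cokernel d) = d + 1"
proof -
  have "fscale.span (cokernel_basis d ` {..d}) = fscale.span (divfree_cokernel d)"
    unfolding fscale.span_eq using cokernel_basis_in_divfree_cokernel divfree_cokernel_subset_span fscale.span_superset
    by blast
  then have "fscale.dim (divfree_cokernel d) = card (cokernel_basis d ` {..d})"
    using independent_cokernel_basis by (intro fscale.dim_eq_card) auto
  also have "\<dots> = d + 1"
    using card_image[OF inj_on_cokernel_basis] by simp
  finally show ?thesis .
qed

theorem lemma8:
  fixes d :: nat
  assumes "d \<ge> 1"
  shows "{h \<in> F3 d. ad (transpose Nmat) h = (\<lambda>_. 0)} \<inter> V3 d =
           {h. \<exists>\<psi>1 \<psi>2 \<psi>3.
               whom_poly (int d - 2) \<psi>1 \<and> whom_poly (int d - 1) \<psi>2 \<and> whom_poly (int d) \<psi>3 \<and>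
               (\<forall>x b. - 2 * deriv (\<lambda>t. \<psi>3 x t) b =
                   x * deriv (\<lambda>t. \<psi>1 t b) x + 3 * \<psi>1 x b + b * deriv (\<lambda>t. \<psi>1 x t) b) \<and>
               (\<forall>\<xi>. let x = \<xi>$1; y = \<xi>$2; p1 = \<psi>1 x (beta \<xi>); p2 = \<psi>2 x (beta \<xi>);
                         p3 = \<psi>3 x (beta \<xi>) in
                  h \<xi> = vector [x^2 * p1, x * y * p1 + x * p2, (1/2) * y^2 * p1 + y * p2 + p3])}
       \<and> vector_space.dim fscale ({h \<in> F3 d. ad (transpose Nmat) h = (\<lambda>_. 0)} \<inter> V3 d) = d + 1"
proof -
  have "(\<forall>\<xi>. let x = \<xi>$1; y = \<xi>$2; p1 = \<psi>1 x (beta \<xi>); p2 = \<psi>2 x (beta \<xi>); p3 = \<psi>3 x (beta \<xi>) in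
          h \<xi> = vector [x^2 * p1, x * y * p1 + x * p2, (1/2) * y^2 * p1 + y * p2 + p3])
        \<longleftrightarrow> h = nform \<psi>1 \<psi>2 \<psi>3" for h \<psi>1 \<psi>2 \<psi>3
    by (simp add: Let_def nform_def fun_eq_iff)
  then show ?thesis
    using divfree_cokernel_eq dim_divfree_cokernel unfolding divfree_cokernel_def by simp
qed

end
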